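(* Let $\mathbb F$ be a field of characteristic $p$, $S=\{R_0,\dots,R_d\}$ a $p'$-valenced scheme on $X$, $x\in X$, $\mathcal T=\mathcal T(x)$, $E_a^*=E_a^*(x)$, and let $M$ lie in the Jacobson radical of $\mathcal T$. Then (i) there is no $R_a\in S$ with $k_a=1$ and $E_a^*M\neq O$; and (ii) there is no $R_a\in S$ with $k_a=1$ and $ME_a^*\neq O$.
   Context: Let $X$ be a nonempty finite set. A scheme of class $d$ on $X$ is a partition $S=\{R_0,\dots,R_d\}$ of $X\times X$ into nonempty sets such that $R_0=\{(b,b):b\in X\}$; for each $c$ there is $c'$ with $R_{c'}=\{(f,e):(e,f)\in R_c\}$; and for all $i,j,k$ the intersection number $p_{ij}^k=|\{\ell\in X:(m,\ell)\in R_i,(\ell,n)\in R_j\}|$ does not depend on $(m,n)\in R_k$. The valency is $k_a=p_{aa'}^0$. $S$ is $p'$-valenced if no valency $k_a$ is divisible by $p$ (every scheme is $0'$-valenced). For $y\in X$, $yR_a=\{z:(y,z)\in R_a\}$; $A_a\in M_X(\mathbb F)$ is the $(0,1)$ adjacency matrix of $R_a$, $E_a^*(y)$ is the diagonal $(0,1)$-matrix with ones exactly at positions indexed by $yR_a$, $O$ is the zero matrix, and $\mathcal T(y)$ is the $\mathbb F$-subalgebra of $M_X(\mathbb F)$ generated by $A_0,\dots,A_d,E_0^*(y),\dots,E_d^*(y)$. *)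

theory Defs
  imports "HOL-Analysis.Analysis"
begin

definition is_scheme :: "(nat \<Rightarrow> ('x::finite \<times> 'x) set) \<Rightarrow> nat \<Rightarrow> bool" where
  "is_scheme R d \<longleftrightarrow>
     (\<forall>i\<le>d. R i \<noteq> {}) \<and>
     (\<forall>i\<le>d. \<forall>j\<le>d. i \<noteq> j \<longrightarrow> R i \<inter> R j = {}) \<and>
     (\<Union>i\<in>{0..d}. R i) = UNIV \<and>
     R 0 = {(b, b) | b. True} \<and>
     (\<forall>c\<le>d. \<exists>c'\<le>d. R c' = {(f, e). (e, f) \<in> R c}) \<and>
     (\<forall>i\<le>d. \<forall>j\<le>d. \<forall>k\<le>d. \<forall>m n m' n'. (m, n) \<in> R k \<longrightarrow> (m', n') \<in> R k \<longrightarrow>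
        card {l. (m, l) \<in> R i \<and> (l, n) \<in> R j} = card {l. (m', l) \<in> R i \<and> (l, n') \<in> R j})"

definition intersection_number :: "(nat \<Rightarrow> ('x::finite \<times> 'x) set) \<Rightarrow> nat \<Rightarrow> nat \<Rightarrow> nat \<Rightarrow> nat" where
  "intersection_number R i j k =
     (let (m, n) = (SOME mn. mn \<in> R k) in card {l. (m, l) \<in> R i \<and> (l, n) \<in> R j})"

definition transpose_index :: "(nat \<Rightarrow> ('x::finite \<times> 'x) set) \<Rightarrow> nat \<Rightarrow> nat \<Rightarrow> nat" where
  "transpose_index R d c = (SOME c'. c' \<le> d \<and> R c' = {(f, e). (e, f) \<in> R c})"

definition valency :: "(nat \<Rightarrow> ('x::finite \<times> 'x) set) \<Rightarrow> nat \<Rightarrow> nat \<Rightarrow> nat" where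
  "valency R d a = intersection_number R a (transpose_index R d a) 0"

definition p'_valenced :: "nat \<Rightarrow> (nat \<Rightarrow> ('x::finite \<times> 'x) set) \<Rightarrow> nat \<Rightarrow> bool" where
  "p'_valenced p R d \<longleftrightarrow> (\<forall>a\<le>d. \<not> p dvd valency R d a)"

definition adj_matrix :: "(nat \<Rightarrow> ('x::finite \<times> 'x) set) \<Rightarrow> nat \<Rightarrow> 'f::field^'x^'x" where
  "adj_matrix R a = (\<chi> i j. if (i, j) \<in> R a then 1 else 0)"

definition dual_idempotent :: "(nat \<Rightarrow> ('x::finite \<times> 'x) set) \<Rightarrow> 'x \<Rightarrow> nat \<Rightarrow> 'f::field^'x^'x" where
  "dual_idempotent R y a = (\<chi> i j. if i = j \<and> (y, i) \<in> R a then 1 else 0)"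

definition mat_smult :: "'f::field \<Rightarrow> 'f^'x^'x \<Rightarrow> 'f^'x^'x" where
  "mat_smult c A = (\<chi> i j. c * A $ i $ j)"

inductive_set terwilliger_alg :: "(nat \<Rightarrow> ('x::finite \<times> 'x) set) \<Rightarrow> nat \<Rightarrow> 'x \<Rightarrow> ('f::field^'x^'x) set"
  for R d y where
  gen_A: "a \<le> d \<Longrightarrow> adj_matrix R a \<in> terwilliger_alg R d y"
| gen_E: "a \<le> d \<Longrightarrow> dual_idempotent R y a \<in> terwilliger_alg R d y"
| one: "mat 1 \<in> terwilliger_alg R d y"
| zero: "0 \<in> terwilliger_alg R d y"
| add: "A \<in> terwilliger_alg R d y \<Longrightarrow> B \<in> terwilliger_alg R d y \<Longrightarrow> A + B \<in> terwilliger_alg R d y"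
| smult: "A \<in> terwilliger_alg R d y \<Longrightarrow> mat_smult c A \<in> terwilliger_alg R d y"
| mult: "A \<in> terwilliger_alg R d y \<Longrightarrow> B \<in> terwilliger_alg R d y \<Longrightarrow> A ** B \<in> terwilliger_alg R d y"

definition left_ideal :: "('f::field^'x::finite^'x) set \<Rightarrow> ('f^'x^'x) set \<Rightarrow> bool" where
  "left_ideal T L \<longleftrightarrow> L \<subseteq> T \<and> 0 \<in> L \<and> (\<forall>A\<in>L. \<forall>B\<in>L. A - B \<in> L) \<and>
     (\<forall>t\<in>T. \<forall>A\<in>L. t ** A \<in> L)"

definition maximal_left_ideal :: "('f::field^'x::finite^'x) set \<Rightarrow> ('f^'x^'x) set \<Rightarrow> bool" where
  "maximal_left_ideal T L \<longleftrightarrow> left_ideal T L \<and> L \<noteq> T \<and>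
     (\<forall>L'. left_ideal T L' \<longrightarrow> L \<subseteq> L' \<longrightarrow> L' = L \<or> L' = T)"

definition jacobson_radical :: "('f::field^'x::finite^'x) set \<Rightarrow> ('f^'x^'x) set" where
  "jacobson_radical T = {M \<in> T. \<forall>L. maximal_left_ideal T L \<longrightarrow> M \<in> L}"

end

theory Submission
  imports Defs
begin

(* The matrix unit E = E*_0(x) lies in T, and every M in the Jacobson radical satisfies
   (M P)_xx = 0 for all P in T: otherwise E M P E = a E with a nonzero, so t = a^-1 P E
   gives (1 - t M) P E = 0, whereas 1 - t M is left invertible in T; hence P E = 0 and
   a = (M P E)_xx = 0.
   On the other hand, the vectors that are constant on every subconstituent x R_i form a
   right T-module (this is where the intersection numbers enter), so row x of every element
   of T, and by transpose-closure also column x, is constant on each x R_i. If k_a = 1,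
   say x R_a = {z}, and E*_a M is nonzero, then M_zc is nonzero for some c, say c in x R_j,
   and the (x,x) entry of A_a M A_j^T equals k_j M_zc, which is nonzero because S is
   p'-valenced. Part (ii) is the mirror image. *)

definition matrix_subalgebra :: "('f::field^'n::finite^'n) set \<Rightarrow> bool" where
  "matrix_subalgebra T \<longleftrightarrow> (\<forall>c. mat c \<in> T) \<and> (\<forall>A\<in>T. \<forall>B\<in>T. A + B \<in> T \<and> A ** B \<in> T)"

definition matrix_unit :: "'n::finite \<Rightarrow> 'f::field^'n^'n" where
  "matrix_unit x = (\<chi> i j. if i = x \<and> j = x then 1 else 0)"

lemma mat_mult_index: "(mat c ** A) $ i $ j = c * (A $ i $ j :: 'f::field)"
  unfolding matrix_matrix_mult_def mat_def
  by (simp add: if_distrib if_distribR cong: if_cong)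

lemma mult_mat_index: "(A ** mat c) $ i $ j = (A $ i $ j :: 'f::field) * c"
  unfolding matrix_matrix_mult_def mat_def
  by (simp add: if_distrib if_distribR cong: if_cong)

lemma matrix_unit_mult_index:
  "(matrix_unit x ** A) $ i $ j = (if i = x then A $ x $ j else (0 :: 'f::field))"
  unfolding matrix_matrix_mult_def matrix_unit_def
  by (simp add: if_distrib if_distribR cong: if_cong)

lemma mult_matrix_unit_index:
  "(A ** matrix_unit x) $ i $ j = (if j = x then A $ i $ x else (0 :: 'f::field))"
  unfolding matrix_matrix_mult_def matrix_unit_def
  by (simp add: if_distrib if_distribR cong: if_cong)

lemma mat_mult_mat: "mat a ** mat b = (mat (a * b) :: 'f::field^'n::finite^'n)"
  by (simp add: vec_eq_iff mat_mult_index) (simp add: mat_def)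

lemma mat_mult_commute: "mat c ** A = A ** (mat c :: 'f::field^'n::finite^'n)"
  by (simp add: vec_eq_iff mat_mult_index mult_mat_index mult.commute)

lemma matrix_diff_rdistrib: "(A - B) ** C = A ** C - B ** (C :: 'f::field^'n::finite^'n)"
  by (simp add: matrix_matrix_mult_def vec_eq_iff left_diff_distrib sum_subtractf)

lemma matrix_unit_sandwich:
  "matrix_unit x ** A ** matrix_unit x = mat (A $ x $ x) ** (matrix_unit x :: 'f::field^'n::finite^'n)"
  by (simp add: vec_eq_iff mat_mult_index mult_matrix_unit_index matrix_unit_mult_index)
     (simp add: matrix_unit_def mat_def)

lemma matrix_subalgebra_diff:
  assumes "matrix_subalgebra T" "A \<in> T" "B \<in> T"
  shows "A - B \<in> T"
proof -
  have "A - B = A + mat (-1) ** B"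
    by (simp add: vec_eq_iff mat_mult_index)
  then show ?thesis
    using assms unfolding matrix_subalgebra_def by metis
qed

lemma left_ideal_Union_chain:
  assumes "C \<noteq> {}" "\<forall>L\<in>C. left_ideal T L" "chain\<^sub>\<subseteq> C"
  shows "left_ideal T (\<Union>C)"
  unfolding left_ideal_def
proof (intro conjI ballI)
  show "\<Union>C \<subseteq> T" "0 \<in> \<Union>C"
    using assms(1,2) by (auto simp: left_ideal_def)
next
  fix A B assume "A \<in> \<Union>C" "B \<in> \<Union>C"
  then obtain P Q where PQ: "P \<in> C" "Q \<in> C" "A \<in> P" "B \<in> Q" by blast
  with assms(3) have "P \<subseteq> Q \<or> Q \<subseteq> P" unfolding chain_subset_def by blast
  with PQ obtain K where "K \<in> C" "A \<in> K" "B \<in> K" by blast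
  then show "A - B \<in> \<Union>C"
    using assms(2) unfolding left_ideal_def by blast
next
  fix t A assume "t \<in> T" "A \<in> \<Union>C"
  then show "t ** A \<in> \<Union>C"
    using assms(2) unfolding left_ideal_def by blast
qed

lemma left_ideal_eq_if_one_mem:
  assumes "left_ideal T L" "mat 1 \<in> L"
  shows "L = T"
proof
  show "L \<subseteq> T" using assms(1) unfolding left_ideal_def by blast
  show "T \<subseteq> L"
  proof
    fix t assume "t \<in> T"
    then have "t ** mat 1 \<in> L" using assms unfolding left_ideal_def by blast
    then show "t \<in> L" by simp
  qed
qed

lemma left_ideal_add:
  assumes "left_ideal T L" "A \<in> L" "B \<in> L"
  shows "A + B \<in> L"
proof -
  have "0 - B \<in> L" using assms unfolding left_ideal_def by blast
  with assms have "A - (0 - B) \<in> L" unfolding left_ideal_def by blast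
  then show ?thesis by simp
qed

lemma left_ideal_principal:
  assumes T: "matrix_subalgebra T" and X: "X \<in> T"
  shows "left_ideal T {s ** X | s. s \<in> T}"
  unfolding left_ideal_def
proof (intro conjI ballI)
  show "{s ** X | s. s \<in> T} \<subseteq> T" using T X unfolding matrix_subalgebra_def by blast
  have "0 \<in> T" using T mat_0 unfolding matrix_subalgebra_def by metis
  then show "0 \<in> {s ** X | s. s \<in> T}" by force
next
  fix A B assume "A \<in> {s ** X | s. s \<in> T}" "B \<in> {s ** X | s. s \<in> T}"
  then obtain a b where ab: "a \<in> T" "b \<in> T" "A = a ** X" "B = b ** X" by blast
  then have "a - b \<in> T" "A - B = (a - b) ** X"
    using T by (simp_all add: matrix_subalgebra_diff matrix_diff_rdistrib)
  then show "A - B \<in> {s ** X | s. s \<in> T}" by blast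
next
  fix u A assume "u \<in> T" "A \<in> {s ** X | s. s \<in> T}"
  then obtain a where "a \<in> T" "A = a ** X" by blast
  then have "u ** a \<in> T" "u ** A = (u ** a) ** X"
    using T \<open>u \<in> T\<close> by (simp_all add: matrix_subalgebra_def matrix_mul_assoc)
  then show "u ** A \<in> {s ** X | s. s \<in> T}" by blast
qed

lemma left_ideal_extends_to_maximal:
  assumes "mat 1 \<in> T" "left_ideal T L" "mat 1 \<notin> L"
  obtains K where "maximal_left_ideal T K" "L \<subseteq> K"
proof -
  define \<A> where "\<A> = {K. left_ideal T K \<and> L \<subseteq> K \<and> mat 1 \<notin> K}"
  have "\<exists>K\<in>\<A>. \<forall>K'\<in>\<A>. K \<subseteq> K' \<longrightarrow> K' = K"
  proof (rule subset_Zorn_nonempty)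
    show "\<A> \<noteq> {}" using assms(2,3) unfolding \<A>_def by blast
  next
    fix C assume C: "C \<noteq> {}" "subset.chain \<A> C"
    then have "C \<subseteq> \<A>" "chain\<^sub>\<subseteq> C" by (auto simp: subset_chain_def chain_subset_def)
    then have "left_ideal T (\<Union>C)"
      using C(1) by (intro left_ideal_Union_chain) (auto simp: \<A>_def)
    moreover have "L \<subseteq> \<Union>C" "mat 1 \<notin> \<Union>C"
      using C(1) \<open>C \<subseteq> \<A>\<close> by (auto simp: \<A>_def)
    ultimately show "\<Union>C \<in> \<A>" by (simp add: \<A>_def)
  qed
  then obtain K where "K \<in> \<A>" and K_max: "\<forall>K'\<in>\<A>. K \<subseteq> K' \<longrightarrow> K' = K" by blast
  then have K: "left_ideal T K" "L \<subseteq> K" "mat 1 \<notin> K" by (simp_all add: \<A>_def)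
  have "maximal_left_ideal T K"
    unfolding maximal_left_ideal_def
  proof (intro conjI allI impI)
    show "left_ideal T K" "K \<noteq> T" using K assms(1) by auto
    fix L' assume L': "left_ideal T L'" "K \<subseteq> L'"
    show "L' = K \<or> L' = T"
    proof (cases "mat 1 \<in> L'")
      case True
      with L'(1) show ?thesis by (simp add: left_ideal_eq_if_one_mem)
    next
      case False
      with L' K(2) K_max show ?thesis by (auto simp: \<A>_def)
    qed
  qed
  then show thesis using K(2) by (rule that)
qed

lemma jacobson_radical_left_mult:
  assumes T: "matrix_subalgebra T" and M: "M \<in> jacobson_radical T" and t: "t \<in> T"
  shows "t ** M \<in> jacobson_radical T"
  unfolding jacobson_radical_def
proof (intro CollectI conjI allI impI)
  have "M \<in> T" using M by (simp add: jacobson_radical_def)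
  with T t show "t ** M \<in> T" by (simp add: matrix_subalgebra_def)
next
  fix K assume K: "maximal_left_ideal T K"
  then have "M \<in> K" using M by (simp add: jacobson_radical_def)
  moreover have "left_ideal T K" using K by (simp add: maximal_left_ideal_def)
  ultimately show "t ** M \<in> K" using t by (simp add: left_ideal_def)
qed

lemma jacobson_radical_left_invertible:
  assumes T: "matrix_subalgebra T" and M: "M \<in> jacobson_radical T" and t: "t \<in> T"
  shows "\<exists>s\<in>T. s ** (mat 1 - t ** M) = mat 1"
proof (rule ccontr)
  assume no_inverse: "\<not> ?thesis"
  define X where "X = mat 1 - t ** M"
  define L where "L = {s ** X | s. s \<in> T}"
  have one: "mat 1 \<in> T" using T by (simp add: matrix_subalgebra_def)
  have tM: "t ** M \<in> jacobson_radical T" using T M t by (rule jacobson_radical_left_mult)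
  then have "t ** M \<in> T" by (simp add: jacobson_radical_def)
  then have "X \<in> T" unfolding X_def using T one by (simp add: matrix_subalgebra_diff)
  then have "left_ideal T L" unfolding L_def using T by (simp add: left_ideal_principal)
  moreover have "mat 1 \<notin> L"
  proof
    assume "mat 1 \<in> L"
    then obtain s where "s \<in> T" "mat 1 = s ** X" unfolding L_def by blast
    with no_inverse show False unfolding X_def by metis
  qed
  ultimately obtain K where K: "maximal_left_ideal T K" "L \<subseteq> K"
    using one left_ideal_extends_to_maximal by blast
  have "mat 1 ** X \<in> L" using one unfolding L_def by blast
  then have "X \<in> K" using K(2) by auto
  moreover have "t ** M \<in> K" using tM K(1) by (simp add: jacobson_radical_def)
  moreover have "left_ideal T K" using K(1) by (simp add: maximal_left_ideal_def)
  ultimately have "mat 1 \<in> K" using left_ideal_add unfolding X_def by fastforce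
  with \<open>left_ideal T K\<close> have "K = T" by (rule left_ideal_eq_if_one_mem)
  with K(1) show False by (simp add: maximal_left_ideal_def)
qed

lemma jacobson_radical_diag_entry_eq_0:
  fixes M P :: "'f::field^'n::finite^'n"
  assumes T: "matrix_subalgebra T" and E: "matrix_unit x \<in> T"
    and M: "M \<in> jacobson_radical T" and P: "P \<in> T"
  shows "(M ** P) $ x $ x = 0"
proof (rule ccontr)
  let ?E = "matrix_unit x :: 'f^'n^'n"
  define \<alpha> where "\<alpha> = (M ** P) $ x $ x"
  assume "(M ** P) $ x $ x \<noteq> 0"
  then have "\<alpha> \<noteq> 0" by (simp add: \<alpha>_def)
  define t where "t = mat (inverse \<alpha>) ** P ** ?E"
  have "t \<in> T" using T E P unfolding t_def matrix_subalgebra_def by blast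
  then obtain s where s: "s ** (mat 1 - t ** M) = mat 1"
    using jacobson_radical_left_invertible[OF T M] by blast
  have "t ** M ** (P ** ?E) = mat (inverse \<alpha>) ** P ** (?E ** (M ** P) ** ?E)"
    by (simp add: t_def matrix_mul_assoc)
  also have "\<dots> = mat (inverse \<alpha>) ** (P ** mat \<alpha>) ** ?E"
    by (simp only: \<alpha>_def matrix_unit_sandwich) (simp only: matrix_mul_assoc)
  also have "\<dots> = mat (inverse \<alpha> * \<alpha>) ** P ** ?E"
    by (simp only: mat_mult_commute[of \<alpha> P, symmetric] matrix_mul_assoc mat_mult_mat)
  also have "\<dots> = P ** ?E"
    using \<open>\<alpha> \<noteq> 0\<close> by simp
  finally have "(mat 1 - t ** M) ** (P ** ?E) = 0"
    by (simp add: matrix_diff_rdistrib)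
  then have "P ** ?E = 0"
    using s by (metis matrix_mul_assoc matrix_mul_lid times0_right)
  then have "\<alpha> = 0"
    unfolding \<alpha>_def by (metis mult_matrix_unit_index matrix_mul_assoc times0_right zero_index)
  with \<open>\<alpha> \<noteq> 0\<close> show False ..
qed

lemma scheme_cover:
  assumes "is_scheme R d"
  shows "\<exists>i\<le>d. p \<in> R i"
proof -
  have "(\<Union>i\<in>{0..d}. R i) = UNIV" using assms unfolding is_scheme_def by (elim conjE)
  then show ?thesis by (metis UNIV_I UN_E atLeastAtMost_iff)
qed

lemma scheme_disjoint:
  assumes "is_scheme R d" "i \<le> d" "j \<le> d" "p \<in> R i" "p \<in> R j"
  shows "i = j"
proof -
  have "\<forall>i\<le>d. \<forall>j\<le>d. i \<noteq> j \<longrightarrow> R i \<inter> R j = {}"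
    using assms(1) unfolding is_scheme_def by (elim conjE)
  with assms(2-) show ?thesis by blast
qed

lemma scheme_diagonal_iff:
  assumes "is_scheme R d"
  shows "(u, w) \<in> R 0 \<longleftrightarrow> u = w"
proof -
  have "R 0 = {(b, b) | b. True}" using assms unfolding is_scheme_def by (elim conjE)
  then show ?thesis by blast
qed

lemma scheme_intersection_count:
  assumes "is_scheme R d" "i \<le> d" "j \<le> d" "k \<le> d" "(m, n) \<in> R k" "(m', n') \<in> R k"
  shows "card {l. (m, l) \<in> R i \<and> (l, n) \<in> R j} = card {l. (m', l) \<in> R i \<and> (l, n') \<in> R j}"
proof -
  have "\<forall>i\<le>d. \<forall>j\<le>d. \<forall>k\<le>d. \<forall>m n m' n'. (m, n) \<in> R k \<longrightarrow> (m', n') \<in> R k \<longrightarrow>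
      card {l. (m, l) \<in> R i \<and> (l, n) \<in> R j} = card {l. (m', l) \<in> R i \<and> (l, n') \<in> R j}"
    using assms(1) unfolding is_scheme_def by (elim conjE)
  with assms(2-) show ?thesis by blast
qed

lemma transpose_index:
  assumes "is_scheme R d" "c \<le> d"
  shows "transpose_index R d c \<le> d" "(u, w) \<in> R (transpose_index R d c) \<longleftrightarrow> (w, u) \<in> R c"
proof -
  have "\<forall>c\<le>d. \<exists>c'\<le>d. R c' = {(f, e). (e, f) \<in> R c}"
    using assms(1) unfolding is_scheme_def by (elim conjE)
  then have "\<exists>c'. c' \<le> d \<and> R c' = {(f, e). (e, f) \<in> R c}"
    using assms(2) by blast
  then have "transpose_index R d c \<le> d \<and> R (transpose_index R d c) = {(f, e). (e, f) \<in> R c}"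
    unfolding transpose_index_def by (rule someI_ex)
  then show "transpose_index R d c \<le> d" "(u, w) \<in> R (transpose_index R d c) \<longleftrightarrow> (w, u) \<in> R c"
    by auto
qed

lemma valency_eq_card:
  assumes S: "is_scheme R d" and a: "a \<le> d"
  shows "valency R d a = card {w. (y, w) \<in> R a}"
proof -
  let ?a' = "transpose_index R d a"
  have "(y, y) \<in> R 0" using scheme_diagonal_iff[OF S] by simp
  then have "(SOME p. p \<in> R 0) \<in> R 0" by (rule someI)
  then obtain m n where mn: "(SOME p. p \<in> R 0) = (m, n)" "(m, n) \<in> R 0" by (metis surj_pair)
  have "valency R d a = card {w. (m, w) \<in> R a \<and> (w, n) \<in> R ?a'}"
    unfolding valency_def intersection_number_def mn(1) by simp
  also have "\<dots> = card {w. (y, w) \<in> R a \<and> (w, y) \<in> R ?a'}"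
    using S a transpose_index(1)[OF S a] le0 mn(2) \<open>(y, y) \<in> R 0\<close> by (rule scheme_intersection_count)
  also have "\<dots> = card {w. (y, w) \<in> R a}"
    using transpose_index(2)[OF S a] by simp
  finally show ?thesis .
qed

lemma of_nat_valency_neq_0:
  assumes pv: "p'_valenced CHAR('f::field) R d" and a: "a \<le> d"
  shows "(of_nat (valency R d a) :: 'f) \<noteq> 0"
  using pv a unfolding p'_valenced_def by (simp add: of_nat_eq_0_iff_char_dvd)

lemma dual_idempotent_0: "is_scheme R d \<Longrightarrow> dual_idempotent R x 0 = matrix_unit x"
  by (auto simp: dual_idempotent_def matrix_unit_def vec_eq_iff scheme_diagonal_iff)

lemma transpose_adj_matrix:
  "is_scheme R d \<Longrightarrow> a \<le> d \<Longrightarrow> transpose (adj_matrix R a) = adj_matrix R (transpose_index R d a)"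
  by (simp add: transpose_def adj_matrix_def vec_eq_iff transpose_index)

lemma terwilliger_alg_subalgebra: "matrix_subalgebra (terwilliger_alg R d y)"
proof -
  have "mat c = mat_smult c (mat 1 :: 'f::field^'x::finite^'x)" for c
    by (simp add: mat_smult_def mat_def vec_eq_iff)
  then show ?thesis
    unfolding matrix_subalgebra_def
    by (metis terwilliger_alg.one terwilliger_alg.smult terwilliger_alg.add terwilliger_alg.mult)
qed

lemma terwilliger_alg_transpose:
  fixes A :: "'f::field^'x::finite^'x"
  assumes S: "is_scheme R d"
  shows "A \<in> terwilliger_alg R d y \<Longrightarrow> transpose A \<in> terwilliger_alg R d y"
proof (induction rule: terwilliger_alg.induct)
  case (gen_A a)
  then show ?case
    using transpose_adj_matrix[OF S] transpose_index(1)[OF S] terwilliger_alg.gen_A by metis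
next
  case (gen_E a)
  have "transpose (dual_idempotent R y a) = (dual_idempotent R y a :: 'f^'x^'x)"
    by (auto simp: transpose_def dual_idempotent_def vec_eq_iff)
  with gen_E show ?case using terwilliger_alg.gen_E by metis
next
  case one
  then show ?case using terwilliger_alg.one by simp
next
  case zero
  then show ?case using terwilliger_alg.zero by (metis mat_0 transpose_mat)
next
  case (add A B)
  have "transpose (A + B) = transpose A + transpose B" by (simp add: transpose_def vec_eq_iff)
  with add show ?case using terwilliger_alg.add by metis
next
  case (smult A c)
  have "transpose (mat_smult c A) = mat_smult c (transpose A)"
    by (simp add: transpose_def mat_smult_def vec_eq_iff)
  with smult show ?case using terwilliger_alg.smult by metis
next
  case (mult A B)
  then show ?case using terwilliger_alg.mult by (simp add: matrix_transpose_mul)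
qed

lemma sum_if_const_eq_card:
  "finite A \<Longrightarrow> (\<Sum>l\<in>A. if P l then c else 0) = of_nat (card {l\<in>A. P l}) * c"
  by (simp add: sum.inter_filter[symmetric])

lemma sum_over_subconstituents:
  fixes g :: "'x::finite \<Rightarrow> 'a::comm_monoid_add"
  assumes S: "is_scheme R d"
  shows "(\<Sum>l\<in>UNIV. g l) = (\<Sum>i\<le>d. \<Sum>l\<in>{l. (x, l) \<in> R i}. g l)"
proof -
  have "UNIV = (\<Union>i\<in>{..d}. {l. (x, l) \<in> R i})"
    using scheme_cover[OF S] by blast
  then have "(\<Sum>l\<in>UNIV. g l) = (\<Sum>l\<in>(\<Union>i\<in>{..d}. {l. (x, l) \<in> R i}). g l)"
    by simp
  also have "\<dots> = (\<Sum>i\<le>d. \<Sum>l\<in>{l. (x, l) \<in> R i}. g l)"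
    by (rule sum.UNION_disjoint) (use scheme_disjoint[OF S] in auto)
  finally show ?thesis .
qed

definition constant_on_subconstituents ::
  "(nat \<Rightarrow> ('x::finite \<times> 'x) set) \<Rightarrow> nat \<Rightarrow> 'x \<Rightarrow> 'f::field^'x \<Rightarrow> bool" where
  "constant_on_subconstituents R d x v \<longleftrightarrow>
     (\<forall>i\<le>d. \<forall>u w. (x, u) \<in> R i \<longrightarrow> (x, w) \<in> R i \<longrightarrow> v $ u = v $ w)"

lemma constant_on_subconstituents_adj_matrix:
  assumes S: "is_scheme R d" and j: "j \<le> d" and v: "constant_on_subconstituents R d x v"
  shows "constant_on_subconstituents R d x (v v* adj_matrix R j)"
proof -
  define rep where "rep i = (SOME l. (x, l) \<in> R i)" for i
  have expand: "(v v* adj_matrix R j) $ u =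
      (\<Sum>i\<le>d. of_nat (card {l. (x, l) \<in> R i \<and> (l, u) \<in> R j}) * v $ rep i)" for u
  proof -
    have "(v v* adj_matrix R j) $ u = (\<Sum>l\<in>UNIV. if (l, u) \<in> R j then v $ l else 0)"
      by (simp add: vector_matrix_mult_def adj_matrix_def if_distrib cong: if_cong)
    also have "\<dots> = (\<Sum>i\<le>d. \<Sum>l\<in>{l. (x, l) \<in> R i}. if (l, u) \<in> R j then v $ l else 0)"
      by (rule sum_over_subconstituents[OF S])
    also have "\<dots> = (\<Sum>i\<le>d. \<Sum>l\<in>{l. (x, l) \<in> R i}. if (l, u) \<in> R j then v $ rep i else 0)"
    proof (intro sum.cong refl)
      fix i l assume i: "i \<in> {..d}" and l: "l \<in> {l. (x, l) \<in> R i}"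
      then have "(x, l) \<in> R i" by simp
      then have "(x, rep i) \<in> R i" unfolding rep_def by (rule someI)
      with i \<open>(x, l) \<in> R i\<close> have "v $ l = v $ rep i"
        using v unfolding constant_on_subconstituents_def by blast
      then show "(if (l, u) \<in> R j then v $ l else 0) = (if (l, u) \<in> R j then v $ rep i else 0)"
        by simp
    qed
    also have "\<dots> = (\<Sum>i\<le>d. of_nat (card {l. (x, l) \<in> R i \<and> (l, u) \<in> R j}) * v $ rep i)"
      by (simp add: sum_if_const_eq_card)
    finally show ?thesis .
  qed
  show ?thesis
    unfolding constant_on_subconstituents_def
  proof (intro allI impI)
    fix k u w assume k: "k \<le> d" and u: "(x, u) \<in> R k" and w: "(x, w) \<in> R k"
    have "card {l. (x, l) \<in> R i \<and> (l, u) \<in> R j} = card {l. (x, l) \<in> R i \<and> (l, w) \<in> R j}"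
      if "i \<in> {..d}" for i
      using S _ j k u w by (rule scheme_intersection_count) (use that in simp)
    then show "(v v* adj_matrix R j) $ u = (v v* adj_matrix R j) $ w"
      unfolding expand by (intro sum.cong refl) simp
  qed
qed

lemma constant_on_subconstituents_dual_idempotent:
  assumes S: "is_scheme R d" and j: "j \<le> d" and v: "constant_on_subconstituents R d x v"
  shows "constant_on_subconstituents R d x (v v* dual_idempotent R x j)"
proof -
  have entry: "(v v* dual_idempotent R x j) $ u = (if (x, u) \<in> R j then v $ u else 0)" for u
  proof -
    have "(v v* dual_idempotent R x j) $ u =
        (\<Sum>l\<in>UNIV. if l = u then (if (x, u) \<in> R j then v $ u else 0) else 0)"
      unfolding vector_matrix_mult_def dual_idempotent_def vec_lambda_beta by (intro sum.cong) auto
    then show ?thesis by simp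
  qed
  show ?thesis
    unfolding constant_on_subconstituents_def
  proof (intro allI impI)
    fix k u w assume k: "k \<le> d" and u: "(x, u) \<in> R k" and w: "(x, w) \<in> R k"
    then have "(x, u) \<in> R j \<longleftrightarrow> (x, w) \<in> R j" using scheme_disjoint[OF S j k] by blast
    moreover have "v $ u = v $ w" using v k u w unfolding constant_on_subconstituents_def by blast
    ultimately show "(v v* dual_idempotent R x j) $ u = (v v* dual_idempotent R x j) $ w"
      unfolding entry by simp
  qed
qed

lemma constant_on_subconstituents_add:
  "constant_on_subconstituents R d x v \<Longrightarrow> constant_on_subconstituents R d x w \<Longrightarrow>
    constant_on_subconstituents R d x (v + w)"
  unfolding constant_on_subconstituents_def by (metis vector_add_component)

lemma constant_on_subconstituents_scale:
  "constant_on_subconstituents R d x v \<Longrightarrow> constant_on_subconstituents R d x (c *s v)"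
  unfolding constant_on_subconstituents_def by (metis vector_smult_component)

lemma constant_on_subconstituents_terwilliger_alg:
  fixes A :: "'f::field^'x::finite^'x"
  assumes S: "is_scheme R d"
  shows "A \<in> terwilliger_alg R d x \<Longrightarrow>
    \<forall>v. constant_on_subconstituents R d x v \<longrightarrow> constant_on_subconstituents R d x (v v* A)"
proof (induction rule: terwilliger_alg.induct)
  case (gen_A a)
  then show ?case using constant_on_subconstituents_adj_matrix[OF S] by blast
next
  case (gen_E a)
  then show ?case using constant_on_subconstituents_dual_idempotent[OF S] by blast
next
  case one
  show ?case by simp
next
  case zero
  have "constant_on_subconstituents R d x (0 :: 'f^'x)"
    by (simp add: constant_on_subconstituents_def)
  then show ?case by simp
next
  case (add A B)
  then show ?case
    by (metis constant_on_subconstituents_add vector_matrix_mult_add_rdistrib)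
next
  case (smult A c)
  have "v v* mat_smult c A = c *s (v v* A)" for v :: "'f^'x"
    by (simp add: vector_matrix_mult_def mat_smult_def vec_eq_iff sum_distrib_left mult_ac)
  with smult show ?case by (metis constant_on_subconstituents_scale)
next
  case (mult A B)
  then show ?case by (metis vector_matrix_mul_assoc)
qed

lemma terwilliger_alg_row_constant:
  fixes A :: "'f::field^'x::finite^'x"
  assumes S: "is_scheme R d" and A: "A \<in> terwilliger_alg R d x"
    and i: "i \<le> d" and u: "(x, u) \<in> R i" and w: "(x, w) \<in> R i"
  shows "A $ x $ u = A $ x $ w"
proof -
  have "constant_on_subconstituents R d x (axis x 1 :: 'f^'x)"
    unfolding constant_on_subconstituents_def
  proof (intro allI impI)
    fix k u w assume k: "k \<le> d" and u: "(x, u) \<in> R k" and w: "(x, w) \<in> R k"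
    have "u = x \<longleftrightarrow> w = x"
      using scheme_disjoint[OF S k le0] scheme_diagonal_iff[OF S] u w by metis
    then show "(axis x 1 :: 'f^'x) $ u = axis x 1 $ w" by (simp add: axis_def)
  qed
  then have "constant_on_subconstituents R d x (axis x 1 v* A)"
    using constant_on_subconstituents_terwilliger_alg[OF S A] by blast
  moreover have "(axis x 1 v* A) $ l = A $ x $ l" for l
    by (simp add: vector_matrix_mult_def axis_def if_distrib if_distribR cong: if_cong)
  ultimately show ?thesis
    using i u w unfolding constant_on_subconstituents_def by metis
qed

lemma terwilliger_alg_row_sum:
  fixes A :: "'f::field^'x::finite^'x"
  assumes S: "is_scheme R d" and A: "A \<in> terwilliger_alg R d x"
    and j: "j \<le> d" and c: "(x, c) \<in> R j"
  shows "(A ** transpose (adj_matrix R j)) $ x $ x = of_nat (valency R d j) * A $ x $ c"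
proof -
  have "(A ** transpose (adj_matrix R j)) $ x $ x = (\<Sum>l\<in>UNIV. if (x, l) \<in> R j then A $ x $ l else 0)"
    by (simp add: matrix_matrix_mult_def transpose_def adj_matrix_def if_distrib cong: if_cong)
  also have "\<dots> = (\<Sum>l\<in>UNIV. if (x, l) \<in> R j then A $ x $ c else 0)"
    using terwilliger_alg_row_constant[OF S A j _ c] by (intro sum.cong) auto
  also have "\<dots> = of_nat (valency R d j) * A $ x $ c"
    by (simp add: sum_if_const_eq_card valency_eq_card[OF S j, of x])
  finally show ?thesis .
qed

lemma terwilliger_alg_column_sum:
  fixes A :: "'f::field^'x::finite^'x"
  assumes S: "is_scheme R d" and A: "A \<in> terwilliger_alg R d x"
    and j: "j \<le> d" and c: "(x, c) \<in> R j"
  shows "(adj_matrix R j ** A) $ x $ x = of_nat (valency R d j) * A $ c $ x"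
proof -
  have "adj_matrix R j ** A = transpose (transpose A ** transpose (adj_matrix R j))"
    by (simp add: matrix_transpose_mul)
  then show ?thesis
    using terwilliger_alg_row_sum[OF S terwilliger_alg_transpose[OF S A] j c]
    by (simp add: transpose_def)
qed

lemma subconstituent_singleton:
  assumes S: "is_scheme R d" and a: "a \<le> d" "valency R d a = 1"
  obtains z where "{w. (x, w) \<in> R a} = {z}"
  using valency_eq_card[OF S a(1), of x] a(2) by (metis card_1_singletonE)

lemma adj_matrix_mult_singleton:
  assumes "{w. (x, w) \<in> R a} = {z}"
  shows "(adj_matrix R a ** A) $ x $ c = (A $ z $ c :: 'f::field)"
proof -
  have "(adj_matrix R a ** A) $ x $ c = (\<Sum>l\<in>UNIV. if l = z then A $ z $ c else 0)"
    using assms unfolding matrix_matrix_mult_def adj_matrix_def vec_lambda_beta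
    by (intro sum.cong) auto
  then show ?thesis by simp
qed

lemma mult_transpose_adj_matrix_singleton:
  assumes "{w. (x, w) \<in> R a} = {z}"
  shows "(A ** transpose (adj_matrix R a)) $ r $ x = (A $ r $ z :: 'f::field)"
proof -
  have "(A ** transpose (adj_matrix R a)) $ r $ x = (\<Sum>l\<in>UNIV. if l = z then A $ r $ z else 0)"
    using assms unfolding matrix_matrix_mult_def transpose_def adj_matrix_def vec_lambda_beta
    by (intro sum.cong) auto
  then show ?thesis by simp
qed

lemma dual_idempotent_mult_index:
  "(dual_idempotent R x a ** A) $ r $ c = (if (x, r) \<in> R a then A $ r $ c else (0 :: 'f::field))"
proof -
  have "(dual_idempotent R x a ** A) $ r $ c =
      (\<Sum>l\<in>UNIV. if l = r then (if (x, r) \<in> R a then A $ r $ c else 0) else 0)"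
    unfolding matrix_matrix_mult_def dual_idempotent_def vec_lambda_beta by (intro sum.cong) auto
  then show ?thesis by simp
qed

lemma mult_dual_idempotent_index:
  "(A ** dual_idempotent R x a) $ r $ c = (if (x, c) \<in> R a then A $ r $ c else (0 :: 'f::field))"
proof -
  have "(A ** dual_idempotent R x a) $ r $ c =
      (\<Sum>l\<in>UNIV. if l = c then (if (x, c) \<in> R a then A $ r $ c else 0) else 0)"
    unfolding matrix_matrix_mult_def dual_idempotent_def vec_lambda_beta by (intro sum.cong) auto
  then show ?thesis by simp
qed

lemma terwilliger_alg_jacobson_diag_entry_eq_0:
  assumes S: "is_scheme R d" and M: "M \<in> jacobson_radical (terwilliger_alg R d x)"
    and P: "P \<in> terwilliger_alg R d x" and Q: "Q \<in> terwilliger_alg R d x"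
  shows "(Q ** M ** P) $ x $ x = 0"
proof (rule jacobson_radical_diag_entry_eq_0)
  show "matrix_subalgebra (terwilliger_alg R d x)" by (rule terwilliger_alg_subalgebra)
  show "matrix_unit x \<in> terwilliger_alg R d x"
    using terwilliger_alg.gen_E[of 0 d R x] by (simp add: dual_idempotent_0[OF S])
  show "Q ** M \<in> jacobson_radical (terwilliger_alg R d x)"
    using terwilliger_alg_subalgebra M Q by (rule jacobson_radical_left_mult)
qed (rule P)

lemma dual_idempotent_mult_jacobson_eq_0:
  fixes M :: "'f::field^'x::finite^'x"
  assumes S: "is_scheme R d" and pv: "p'_valenced CHAR('f) R d"
    and M: "M \<in> jacobson_radical (terwilliger_alg R d x)"
    and a: "a \<le> d" "valency R d a = 1"
  shows "dual_idempotent R x a ** M = 0"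
proof (rule ccontr)
  obtain z where z: "{w. (x, w) \<in> R a} = {z}" using subconstituent_singleton[OF S a] .
  assume "dual_idempotent R x a ** M \<noteq> 0"
  then obtain r c where r: "(x, r) \<in> R a" and "M $ r $ c \<noteq> 0"
    by (metis vec_eq_iff zero_index dual_idempotent_mult_index)
  moreover have "r = z" using z r by blast
  ultimately have Mzc: "M $ z $ c \<noteq> 0" by simp
  obtain j where j: "j \<le> d" "(x, c) \<in> R j" using scheme_cover[OF S] by blast
  have AM: "adj_matrix R a ** M \<in> terwilliger_alg R d x"
    using M a(1) by (auto simp: jacobson_radical_def intro: terwilliger_alg.intros)
  have At: "transpose (adj_matrix R j) \<in> terwilliger_alg R d x"
    using j(1) by (intro terwilliger_alg_transpose[OF S] terwilliger_alg.gen_A)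
  have "(adj_matrix R a ** M ** transpose (adj_matrix R j)) $ x $ x = 0"
    by (rule terwilliger_alg_jacobson_diag_entry_eq_0[OF S M At terwilliger_alg.gen_A[OF a(1)]])
  moreover have "(adj_matrix R a ** M ** transpose (adj_matrix R j)) $ x $ x =
      of_nat (valency R d j) * M $ z $ c"
    using terwilliger_alg_row_sum[OF S AM j] by (simp add: adj_matrix_mult_singleton[of x R a z, OF z])
  ultimately show False
    using Mzc of_nat_valency_neq_0[OF pv j(1)] by simp
qed

lemma jacobson_mult_dual_idempotent_eq_0:
  fixes M :: "'f::field^'x::finite^'x"
  assumes S: "is_scheme R d" and pv: "p'_valenced CHAR('f) R d"
    and M: "M \<in> jacobson_radical (terwilliger_alg R d x)"
    and a: "a \<le> d" "valency R d a = 1"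
  shows "M ** dual_idempotent R x a = 0"
proof (rule ccontr)
  obtain z where z: "{w. (x, w) \<in> R a} = {z}" using subconstituent_singleton[OF S a] .
  assume "M ** dual_idempotent R x a \<noteq> 0"
  then obtain r c where c: "(x, c) \<in> R a" and "M $ r $ c \<noteq> 0"
    by (metis vec_eq_iff zero_index mult_dual_idempotent_index)
  moreover have "c = z" using z c by blast
  ultimately have Mrz: "M $ r $ z \<noteq> 0" by simp
  obtain i where i: "i \<le> d" "(x, r) \<in> R i" using scheme_cover[OF S] by blast
  have At: "transpose (adj_matrix R a) \<in> terwilliger_alg R d x"
    using a(1) by (intro terwilliger_alg_transpose[OF S] terwilliger_alg.gen_A)
  then have MA: "M ** transpose (adj_matrix R a) \<in> terwilliger_alg R d x"
    using M by (auto simp: jacobson_radical_def intro: terwilliger_alg.mult)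
  have "(adj_matrix R i ** M ** transpose (adj_matrix R a)) $ x $ x = 0"
    by (rule terwilliger_alg_jacobson_diag_entry_eq_0[OF S M At terwilliger_alg.gen_A[OF i(1)]])
  moreover have "(adj_matrix R i ** M ** transpose (adj_matrix R a)) $ x $ x =
      of_nat (valency R d i) * M $ r $ z"
    using terwilliger_alg_column_sum[OF S MA i]
    by (simp add: matrix_mul_assoc mult_transpose_adj_matrix_singleton[of x R a z, OF z])
  ultimately show False
    using Mrz of_nat_valency_neq_0[OF pv i(1)] by simp
qed

theorem lemma5p1:
  fixes R :: "nat \<Rightarrow> ('x::finite \<times> 'x) set" and d :: nat and x :: 'x
    and M :: "'f::field^'x^'x"
  assumes "is_scheme R d"
    and "p'_valenced CHAR('f) R d"
    and "M \<in> jacobson_radical (terwilliger_alg R d x)"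
  shows "\<not> (\<exists>a\<le>d. valency R d a = 1 \<and> dual_idempotent R x a ** M \<noteq> 0) \<and>
         \<not> (\<exists>a\<le>d. valency R d a = 1 \<and> M ** dual_idempotent R x a \<noteq> 0)"
  using dual_idempotent_mult_jacobson_eq_0[OF assms] jacobson_mult_dual_idempotent_eq_0[OF assms]
  by blast

end
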